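(* Fix $b\in(0,1/9)$. For $t\in(0,1/9)$ let $\mathcal S_t$ be the system on $\mathbb R$ given by $S_{1,t}(x)=tx$, $S_2(x)=bx$, $S_3(x)=(x+8)/9$, with attractor $K_t$. Then for Lebesgue almost all $t\in(0,1/9)$, $$S_{1,t}(K_t)\cap S_2(K_t)=S_{1,t}S_2(K_t).$$
   Context: The attractor $K_t$ is the unique nonempty compact set with $K_t=S_{1,t}(K_t)\cup S_2(K_t)\cup S_3(K_t)$. *)

theory Defs
  imports "HOL-Analysis.Analysis"
begin

definition S1 :: "real \<Rightarrow> real \<Rightarrow> real" where "S1 t x = t * x"
definition S2 :: "real \<Rightarrow> real \<Rightarrow> real" where "S2 b x = b * x"
definition S3 :: "real \<Rightarrow> real" where "S3 x = (x + 8) / 9"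

definition attractor :: "real \<Rightarrow> real \<Rightarrow> real set" where
  "attractor b t = (THE K. K \<noteq> {} \<and> compact K \<and>
      K = S1 t ` K \<union> S2 b ` K \<union> S3 ` K)"

end

theory Submission
  imports Defs
begin

text \<open>
  The maps are 1/9-contractions sending [0, 1] into itself, so the attractor K is the
  intersection of the Hutchinson iterates of [0, 1], and every point of K lies in the image of
  [0, 1] under some word of length L. If x \<in> S1 K \<inter> S2 K is not in S1 (S2 K), peeling off the
  largest power of t from x = t y and of b from x = b y' gives t^n S3 y = b^m S3 y' with
  y, y' \<in> K and n, m \<ge> 1, which forces 8 b^m \<le> t^(n-1). Replacing y, y' by the images of 0
  under words w, w' turns this coincidence into \<bar>g t\<bar> \<le> \<rho> w + \<rho> w' for
  g t = t^n S3(w_t 0) - b^m S3(w'_t 0), where \<rho> is the contraction ratio of a word at t = 1/9;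
  on that parameter range g increases with slope at least 4 b^m. Hence the
  coincidence parameters lie in finitely many intervals of total length
  O((3 (2/9 + b))^L / b^m), which tends to 0 because b < 1/9.
\<close>

definition hutchinson :: "('i \<Rightarrow> 'a \<Rightarrow> 'a) \<Rightarrow> 'i set \<Rightarrow> 'a set \<Rightarrow> 'a set" where
  "hutchinson f I A = (\<Union>i\<in>I. f i ` A)"

lemma hutchinson_mono: "A \<subseteq> B \<Longrightarrow> hutchinson f I A \<subseteq> hutchinson f I B"
  unfolding hutchinson_def by blast

lemma hutchinson_iterate_mono: "A \<subseteq> B \<Longrightarrow> (hutchinson f I ^^ L) A \<subseteq> (hutchinson f I ^^ L) B"
  by (induction L) (simp_all add: hutchinson_mono)

lemma hutchinson_iterates_subset:
  assumes "hutchinson f I X \<subseteq> X"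
  shows "(hutchinson f I ^^ n) X \<subseteq> X"
proof (induction n)
  case (Suc n)
  then have "hutchinson f I ((hutchinson f I ^^ n) X) \<subseteq> hutchinson f I X"
    by (rule hutchinson_mono)
  then show ?case using assms by simp
qed simp

lemma hutchinson_iterates_antimono:
  assumes "hutchinson f I X \<subseteq> X" and "L \<le> M"
  shows "(hutchinson f I ^^ M) X \<subseteq> (hutchinson f I ^^ L) X"
proof -
  have "(hutchinson f I ^^ M) X = (hutchinson f I ^^ L) ((hutchinson f I ^^ (M - L)) X)"
    using \<open>L \<le> M\<close> by (metis funpow_add le_add_diff_inverse o_apply)
  also have "\<dots> \<subseteq> (hutchinson f I ^^ L) X"
    by (intro hutchinson_iterate_mono hutchinson_iterates_subset assms(1))
  finally show ?thesis .
qed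

lemma fixpoint_in_hutchinson_iterates:
  assumes "i \<in> I" "f i x = x" "x \<in> X"
  shows "x \<in> (hutchinson f I ^^ L) X"
proof (induction L)
  case (Suc L)
  then have "x \<in> f i ` (hutchinson f I ^^ L) X" using assms(2) by (metis image_eqI)
  then show ?case using assms(1) unfolding funpow.simps o_apply hutchinson_def by blast
qed (use assms in simp)

lemma compact_hutchinson_iterates:
  fixes f :: "'i \<Rightarrow> 'a::topological_space \<Rightarrow> 'a"
  assumes "finite I" "\<And>i. i \<in> I \<Longrightarrow> continuous_on UNIV (f i)" "compact X"
  shows "compact ((hutchinson f I ^^ L) X)"
proof (induction L)
  case (Suc L)
  have "compact (f i ` (hutchinson f I ^^ L) X)" if "i \<in> I" for i
    using Suc assms(2)[OF that] by (blast intro: compact_continuous_image continuous_on_subset)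
  then show ?case
    using assms(1) unfolding funpow.simps o_apply hutchinson_def[of f I "(hutchinson f I ^^ L) X"]
    by (blast intro: compact_UN)
qed (use assms in simp)

lemma hutchinson_iterates_nonempty:
  "I \<noteq> {} \<Longrightarrow> X \<noteq> {} \<Longrightarrow> (hutchinson f I ^^ L) X \<noteq> {}"
  by (induction L) (auto simp: hutchinson_def)

lemma finite_index_holds_at_all_levels:
  fixes P :: "'i \<Rightarrow> nat \<Rightarrow> bool"
  assumes "finite I" and some: "\<And>L. \<exists>i\<in>I. P i L" and antimono: "\<And>i L M. L \<le> M \<Longrightarrow> P i M \<Longrightarrow> P i L"
  shows "\<exists>i\<in>I. \<forall>L. P i L"
proof (rule ccontr)
  assume "\<not> ?thesis"
  then obtain N where N: "\<And>i. i \<in> I \<Longrightarrow> \<not> P i (N i)" by metis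
  obtain i where "i \<in> I" "P i (Max (N ` I))" using some by blast
  moreover have "N i \<le> Max (N ` I)" using \<open>i \<in> I\<close> \<open>finite I\<close> by simp
  ultimately show False using N antimono by blast
qed

lemma hutchinson_Inter_decreasing:
  fixes f :: "'i \<Rightarrow> 'a::heine_borel \<Rightarrow> 'a"
  assumes "finite I" and cont: "\<And>i. i \<in> I \<Longrightarrow> continuous_on UNIV (f i)"
    and A: "\<And>L. compact (A L)" "decseq A"
  shows "(\<Inter>L. hutchinson f I (A L)) \<subseteq> hutchinson f I (\<Inter>L. A L)"
proof
  fix x assume x: "x \<in> (\<Inter>L. hutchinson f I (A L))"
  have "\<exists>i\<in>I. x \<in> f i ` A L" for L
    using x unfolding hutchinson_def by blast
  moreover have "x \<in> f i ` A L" if "L \<le> M" "x \<in> f i ` A M" for i L M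
    using decseqD[OF A(2) that(1)] that(2) by blast
  ultimately have "\<exists>i\<in>I. \<forall>L. x \<in> f i ` A L"
    by (rule finite_index_holds_at_all_levels[OF \<open>finite I\<close>])
  then obtain i where i: "i \<in> I" "\<And>L. x \<in> f i ` A L" by blast
  have "closed (f i -` {x})"
    using cont[OF i(1)] by (simp add: closed_vimage)
  then have "compact (A L \<inter> f i -` {x})" for L
    using A(1) by (rule compact_Int_closed[rotated])
  moreover have "A L \<inter> f i -` {x} \<noteq> {}" for L
    using i(2) by blast
  moreover have "A M \<inter> f i -` {x} \<subseteq> A L \<inter> f i -` {x}" if "L \<le> M" for L M
    using decseqD[OF A(2) that] by blast
  ultimately have "\<Inter>(range (\<lambda>L. A L \<inter> f i -` {x})) \<noteq> {}"
    by (rule compact_nest)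
  then obtain z where "z \<in> (\<Inter>L. A L)" "f i z = x" by auto
  then show "x \<in> hutchinson f I (\<Inter>L. A L)" using i(1) unfolding hutchinson_def by blast
qed

theorem hutchinson_fixpoint_exists:
  fixes f :: "'i \<Rightarrow> 'a::heine_borel \<Rightarrow> 'a"
  assumes I: "finite I" "I \<noteq> {}" and cont: "\<And>i. i \<in> I \<Longrightarrow> continuous_on UNIV (f i)"
    and X: "compact X" "X \<noteq> {}" "hutchinson f I X \<subseteq> X"
  defines "K \<equiv> \<Inter>L. (hutchinson f I ^^ L) X"
  shows "K \<noteq> {}" "compact K" "hutchinson f I K = K"
proof -
  let ?A = "\<lambda>L. (hutchinson f I ^^ L) X"
  have A_compact: "compact (?A L)" for L
    by (intro compact_hutchinson_iterates[OF I(1) _ X(1)] cont)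
  have A_decseq: "decseq ?A"
    unfolding decseq_def using hutchinson_iterates_antimono[OF X(3)] by blast
  show "K \<noteq> {}" unfolding K_def
    by (rule compact_nest[OF A_compact hutchinson_iterates_nonempty[OF I(2) X(2)] decseqD[OF A_decseq]])
  show "compact K" unfolding K_def
    by (rule compact_Inter) (use A_compact in auto)
  have "hutchinson f I K \<subseteq> ?A L" for L
  proof -
    have "hutchinson f I K \<subseteq> hutchinson f I (?A L)"
      unfolding K_def by (rule hutchinson_mono) (rule INT_lower, rule UNIV_I)
    also have "\<dots> \<subseteq> ?A L"
      using decseqD[OF A_decseq, of L "Suc L"] by simp
    finally show ?thesis .
  qed
  then have "hutchinson f I K \<subseteq> K"
    unfolding K_def by (rule INT_greatest)
  moreover have "K \<subseteq> hutchinson f I K"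
  proof -
    have "K \<subseteq> (\<Inter>L. hutchinson f I (?A L))"
    proof (rule INT_greatest)
      fix L
      have "K \<subseteq> ?A (Suc L)" unfolding K_def by (rule INT_lower) (rule UNIV_I)
      then show "K \<subseteq> hutchinson f I (?A L)" by simp
    qed
    also have "\<dots> \<subseteq> hutchinson f I K"
      unfolding K_def by (rule hutchinson_Inter_decreasing[OF I(1) cont A_compact A_decseq])
    finally show ?thesis .
  qed
  ultimately show "hutchinson f I K = K" ..
qed

lemma infdist_image_le:
  fixes f :: "'a::heine_borel \<Rightarrow> 'a"
  assumes "c-lipschitz_on UNIV f" "f ` X \<subseteq> X" "closed X" "X \<noteq> {}"
  shows "infdist (f a) X \<le> c * infdist a X"
proof -
  obtain x where x: "x \<in> X" "infdist a X = dist a x"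
    using infdist_attains_inf[OF assms(3,4)] by blast
  have "f x \<in> X" using x(1) assms(2) by blast
  then have "infdist (f a) X \<le> dist (f a) (f x)"
    by (rule infdist_le)
  also have "\<dots> \<le> c * dist a x"
    using assms(1) by (rule lipschitz_onD) (rule UNIV_I)+
  finally show ?thesis unfolding x(2) .
qed

lemma invariant_compact_subset:
  fixes f :: "'i \<Rightarrow> 'a::heine_borel \<Rightarrow> 'a"
  assumes lip: "\<And>i. i \<in> I \<Longrightarrow> c-lipschitz_on UNIV (f i)" and "c < 1"
    and X: "closed X" "X \<noteq> {}" "hutchinson f I X \<subseteq> X"
    and K: "compact K" "K \<noteq> {}" "K \<subseteq> hutchinson f I K"
  shows "K \<subseteq> X"
proof -
  have "continuous_on K (\<lambda>y. infdist y X)"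
    by (intro continuous_on_infdist continuous_on_id)
  then have "\<exists>a\<in>K. \<forall>y\<in>K. infdist y X \<le> infdist a X"
    by (rule continuous_attains_sup[OF K(1,2)])
  then obtain a where a: "a \<in> K" "\<And>y. y \<in> K \<Longrightarrow> infdist y X \<le> infdist a X"
    by blast
  then obtain i z where iz: "i \<in> I" "z \<in> K" "a = f i z"
    using K(3) unfolding hutchinson_def by blast
  have "f i ` X \<subseteq> X" using iz(1) X(3) unfolding hutchinson_def by blast
  then have "infdist (f i z) X \<le> c * infdist z X"
    by (rule infdist_image_le[OF lip[OF iz(1)] _ X(1,2)])
  then have "infdist a X \<le> c * infdist z X" using iz(3) by simp
  also have "\<dots> \<le> c * infdist a X"
    using a(2)[OF iz(2)] lipschitz_on_nonneg[OF lip[OF iz(1)]] by (rule mult_left_mono)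
  finally have "infdist a X = 0"
    using \<open>c < 1\<close> infdist_nonneg[of a X] by (simp add: mult_le_cancel_right1)
  then have "infdist y X = 0" if "y \<in> K" for y
    using a(2)[OF that] infdist_nonneg[of y X] by linarith
  then show ?thesis
    using in_closed_iff_infdist_zero[OF X(1,2)] by blast
qed

lemma hutchinson_iterates_approx:
  fixes f :: "'i \<Rightarrow> 'a::metric_space \<Rightarrow> 'a"
  assumes lip: "\<And>i. i \<in> I \<Longrightarrow> c-lipschitz_on UNIV (f i)"
    and X: "bounded X" and K: "K \<subseteq> X" "K \<noteq> {}" "hutchinson f I K \<subseteq> K"
  shows "x \<in> (hutchinson f I ^^ L) X \<Longrightarrow> \<exists>y\<in>K. dist x y \<le> c ^ L * diameter X"
proof (induction L arbitrary: x)
  case 0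
  obtain y where "y \<in> K" using K(2) by blast
  then show ?case using 0 K(1) X by (auto intro!: bexI[of _ y] diameter_bounded_bound)
next
  case (Suc L)
  then obtain i a where ia: "i \<in> I" "a \<in> (hutchinson f I ^^ L) X" "x = f i a"
    unfolding funpow.simps o_apply hutchinson_def[of f I "(hutchinson f I ^^ L) X"] by blast
  obtain y where y: "y \<in> K" "dist a y \<le> c ^ L * diameter X"
    using Suc.IH[OF ia(2)] by blast
  have "f i y \<in> K" using y(1) ia(1) K(3) unfolding hutchinson_def by blast
  moreover have "dist x (f i y) \<le> c * dist a y"
    using ia(3) lipschitz_onD[OF lip[OF ia(1)]] by simp
  moreover have "c * dist a y \<le> c * (c ^ L * diameter X)"
    using y(2) lipschitz_on_nonneg[OF lip[OF ia(1)]] by (rule mult_left_mono)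
  ultimately show ?case by (auto intro!: bexI[of _ "f i y"])
qed

lemma Inter_hutchinson_iterates_subset:
  fixes f :: "'i \<Rightarrow> 'a::metric_space \<Rightarrow> 'a"
  assumes lip: "\<And>i. i \<in> I \<Longrightarrow> c-lipschitz_on UNIV (f i)" and c: "0 \<le> c" "c < 1"
    and "bounded X" and K: "closed K" "K \<subseteq> X" "K \<noteq> {}" "hutchinson f I K \<subseteq> K"
  shows "(\<Inter>L. (hutchinson f I ^^ L) X) \<subseteq> K"
proof
  fix x assume x: "x \<in> (\<Inter>L. (hutchinson f I ^^ L) X)"
  have "\<exists>y\<in>K. dist y x < e" if "e > 0" for e
  proof -
    define d where "d = diameter X + 1"
    have "0 < d" unfolding d_def using diameter_ge_0[OF \<open>bounded X\<close>] by linarith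
    then obtain L where L: "c ^ L < e / d"
      using real_arch_pow_inv[of "e / d" c] \<open>e > 0\<close> c by auto
    have "x \<in> (hutchinson f I ^^ L) X" using x by blast
    then obtain y where y: "y \<in> K" "dist x y \<le> c ^ L * diameter X"
      using hutchinson_iterates_approx[OF lip \<open>bounded X\<close> K(2-4)] by blast
    have "c ^ L * diameter X \<le> c ^ L * d"
      unfolding d_def using c by (simp add: mult_left_mono)
    also have "\<dots> < e" using L \<open>0 < d\<close> by (simp add: pos_less_divide_eq)
    finally have "dist y x < e" using y(2) by (simp add: dist_commute)
    then show ?thesis using y(1) by blast
  qed
  then show "x \<in> K" using closed_approachable[OF K(1)] by blast
qed

theorem hutchinson_fixpoint_unique:
  fixes f :: "'i \<Rightarrow> 'a::heine_borel \<Rightarrow> 'a"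
  assumes lip: "\<And>i. i \<in> I \<Longrightarrow> c-lipschitz_on UNIV (f i)" and "c < 1"
    and X: "compact X" "X \<noteq> {}" "hutchinson f I X \<subseteq> X"
    and K: "compact K" "K \<noteq> {}" "hutchinson f I K = K"
  shows "K = (\<Inter>L. (hutchinson f I ^^ L) X)"
proof -
  have "I \<noteq> {}" using K(2,3) by (auto simp: hutchinson_def)
  then obtain i where "i \<in> I" by blast
  then have "0 \<le> c" by (rule lipschitz_on_nonneg[OF lip])
  have KX: "K \<subseteq> X"
    using invariant_compact_subset[OF lip \<open>c < 1\<close> compact_imp_closed[OF X(1)] X(2,3) K(1,2)]
      K(3) by simp
  have "K \<subseteq> (hutchinson f I ^^ L) X" for L
  proof (induction L)
    case (Suc L)
    then have "hutchinson f I K \<subseteq> hutchinson f I ((hutchinson f I ^^ L) X)"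
      by (rule hutchinson_mono)
    then show ?case using K(3) by simp
  qed (use KX in simp)
  then have "K \<subseteq> (\<Inter>L. (hutchinson f I ^^ L) X)" by blast
  moreover have "(\<Inter>L. (hutchinson f I ^^ L) X) \<subseteq> K"
    using Inter_hutchinson_iterates_subset[OF lip \<open>0 \<le> c\<close> \<open>c < 1\<close> compact_imp_bounded[OF X(1)]
        compact_imp_closed[OF K(1)] KX K(2) equalityD1[OF K(3)]] .
  ultimately show ?thesis by (rule equalityI)
qed

definition words :: "'i set \<Rightarrow> nat \<Rightarrow> 'i list set" where
  "words I L = {w. set w \<subseteq> I \<and> length w = L}"

lemma words_Suc: "words I (Suc L) = (\<lambda>(w, i). i # w) ` (words I L \<times> I)"
  unfolding words_def by (rule lists_length_Suc_eq)

lemma finite_words: "finite I \<Longrightarrow> finite (words I L)"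
  unfolding words_def by (rule finite_lists_length_eq)

lemma card_words: "finite I \<Longrightarrow> card (words I L) = card I ^ L"
  unfolding words_def by (rule card_lists_length_eq)

lemma sum_words_prod_list:
  fixes r :: "'i \<Rightarrow> 'a::comm_semiring_1"
  assumes "finite I"
  shows "(\<Sum>w\<in>words I L. \<Prod>i\<leftarrow>w. r i) = (\<Sum>i\<in>I. r i) ^ L"
proof (induction L)
  case 0
  have "words I 0 = {[]}" by (auto simp: words_def)
  then show ?case by simp
next
  case (Suc L)
  have inj: "inj_on (\<lambda>(w, i). i # w) (words I L \<times> I)"
    by (auto simp: inj_on_def)
  have "(\<Sum>w\<in>words I (Suc L). \<Prod>i\<leftarrow>w. r i) = (\<Sum>(w, i)\<in>words I L \<times> I. r i * (\<Prod>j\<leftarrow>w. r j))"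
    unfolding words_Suc by (subst sum.reindex[OF inj]) (simp add: case_prod_unfold)
  also have "\<dots> = (\<Sum>w\<in>words I L. \<Sum>i\<in>I. r i * (\<Prod>j\<leftarrow>w. r j))"
    by (rule sum.cartesian_product[symmetric])
  also have "\<dots> = (\<Sum>i\<in>I. r i) ^ Suc L"
    by (simp add: sum_distrib_right[symmetric] sum_distrib_left[symmetric] Suc mult.commute)
  finally show ?case .
qed

lemma prod_list_map_mono:
  fixes r s :: "'i \<Rightarrow> 'a::linordered_semidom"
  assumes "\<And>i. i \<in> set w \<Longrightarrow> 0 \<le> r i \<and> r i \<le> s i"
  shows "(\<Prod>i\<leftarrow>w. r i) \<le> (\<Prod>i\<leftarrow>w. s i)"
  using assms
proof (induction w)
  case (Cons j w)
  have "0 \<le> r j" "r j \<le> s j" "0 \<le> s j" using Cons.prems by (auto intro: order_trans)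
  moreover have "0 \<le> (\<Prod>i\<leftarrow>w. r i)"
    using Cons.prems by (intro prod_list_nonneg) auto
  ultimately show ?case using Cons.IH Cons.prems by (simp add: mult_mono)
qed simp

fun word_map :: "('i \<Rightarrow> 'a \<Rightarrow> 'a) \<Rightarrow> 'i list \<Rightarrow> 'a \<Rightarrow> 'a" where
  "word_map f [] x = x"
| "word_map f (i # w) x = f i (word_map f w x)"

lemma hutchinson_iterates_words:
  "(hutchinson f I ^^ L) X = (\<Union>w\<in>words I L. word_map f w ` X)"
proof (induction L)
  case 0
  have "words I 0 = {[]}" by (auto simp: words_def)
  then show ?case by simp
next
  case (Suc L)
  have "(hutchinson f I ^^ Suc L) X = (\<Union>i\<in>I. \<Union>w\<in>words I L. f i ` word_map f w ` X)"
    by (simp add: Suc hutchinson_def image_UN)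
  also have "\<dots> = (\<Union>w\<in>words I (Suc L). word_map f w ` X)"
    unfolding words_Suc by (auto simp: image_image; blast)
  finally show ?case .
qed

lemma outer_measure_UN_le:
  assumes "finite P"
    and cover: "\<And>p. p \<in> P \<Longrightarrow> \<exists>T. E p \<subseteq> T \<and> T \<in> lmeasurable \<and> measure lebesgue T \<le> m p"
  shows "\<exists>T. (\<Union>p\<in>P. E p) \<subseteq> T \<and> T \<in> lmeasurable \<and> measure lebesgue T \<le> (\<Sum>p\<in>P. m p)"
proof -
  obtain T where T: "\<And>p. p \<in> P \<Longrightarrow> E p \<subseteq> T p \<and> T p \<in> lmeasurable \<and> measure lebesgue (T p) \<le> m p"
    using cover by metis
  have "(\<Union>p\<in>P. T p) \<in> lmeasurable"
    using T \<open>finite P\<close> by (intro fmeasurable.finite_UN) auto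
  moreover have "measure lebesgue (\<Union>p\<in>P. T p) \<le> (\<Sum>p\<in>P. measure lebesgue (T p))"
    using T \<open>finite P\<close> by (intro measure_UNION_le) (auto dest: fmeasurableD)
  moreover have "(\<Sum>p\<in>P. measure lebesgue (T p)) \<le> (\<Sum>p\<in>P. m p)"
    using T by (intro sum_mono) auto
  moreover have "(\<Union>p\<in>P. E p) \<subseteq> (\<Union>p\<in>P. T p)"
    using T by blast
  ultimately show ?thesis by (meson order.trans)
qed

lemma steep_function_small_values_outer_measure:
  fixes g :: "real \<Rightarrow> real"
  assumes "0 < c" "0 \<le> r"
    and steep: "\<And>s t. s \<in> E \<Longrightarrow> t \<in> E \<Longrightarrow> s < t \<Longrightarrow> c * (t - s) \<le> g t - g s"
    and small: "\<And>t. t \<in> E \<Longrightarrow> \<bar>g t\<bar> \<le> r"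
  shows "\<exists>T. E \<subseteq> T \<and> T \<in> lmeasurable \<and> measure lebesgue T \<le> 4 * r / c"
proof (cases "E = {}")
  case False
  then obtain s where s: "s \<in> E" by blast
  have close: "\<bar>t - s\<bar> \<le> 2 * r / c" if t: "t \<in> E" for t
  proof -
    have "c * \<bar>t - s\<bar> \<le> 2 * r"
    proof (cases "s < t")
      case True
      then show ?thesis using steep[OF s t] small[OF s] small[OF t] by (simp add: abs_le_iff)
    next
      case False
      then show ?thesis
        using steep[OF t s] small[OF s] small[OF t] \<open>0 \<le> r\<close> \<open>0 < c\<close>
        by (cases "t = s") (auto simp: abs_le_iff)
    qed
    then show ?thesis using \<open>0 < c\<close> by (simp add: pos_le_divide_eq mult.commute)
  qed
  have "E \<subseteq> {s - 2 * r / c .. s + 2 * r / c}"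
  proof
    fix t assume "t \<in> E"
    then show "t \<in> {s - 2 * r / c .. s + 2 * r / c}" using close[of t] by (simp add: abs_le_iff)
  qed
  moreover have "measure lebesgue {s - 2 * r / c .. s + 2 * r / c} = 4 * r / c"
    using \<open>0 \<le> r\<close> \<open>0 < c\<close> by simp
  ultimately show ?thesis by (intro exI[of _ "{s - 2 * r / c .. s + 2 * r / c}"]) auto
qed (intro exI[of _ "{}"], use assms in auto)

lemma power_prefix_decomposition:
  fixes p q x y\<^sub>0 :: real and g :: "real \<Rightarrow> real"
  assumes p: "0 < p" "p < 1" and "bounded K"
    and scale: "\<And>y. y \<in> K \<Longrightarrow> p * y \<in> K"
    and split: "\<And>y. y \<in> K \<Longrightarrow> (\<exists>z\<in>K. y = p * z) \<or> (\<exists>z\<in>K. y = q * z) \<or> (\<exists>z\<in>K. y = g z)"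
    and x: "y\<^sub>0 \<in> K" "x = p * y\<^sub>0" "x \<noteq> 0"
    and not_pq: "\<And>y. y \<in> K \<Longrightarrow> x \<noteq> p * (q * y)"
  shows "\<exists>n\<ge>1. \<exists>y\<in>K. x = p ^ n * g y"
proof -
  obtain B where B: "1 \<le> B" "\<And>y. y \<in> K \<Longrightarrow> \<bar>y\<bar> \<le> B"
    using \<open>bounded K\<close> unfolding bounded_real by (metis abs_ge_self max.cobounded1 max.cobounded2 order.trans)
  define S where "S = {k. \<exists>w\<in>K. x = p ^ k * w}"
  obtain N where N: "p ^ N < \<bar>x\<bar> / B"
    using real_arch_pow_inv[of "\<bar>x\<bar> / B" p] x(3) B(1) p by auto
  have "S \<subseteq> {..<N}"
  proof
    fix k assume "k \<in> S"
    then obtain w where w: "w \<in> K" "x = p ^ k * w" by (auto simp: S_def)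
    have "\<bar>x\<bar> \<le> p ^ k * B"
      using w B(2)[OF w(1)] p by (simp add: abs_mult mult_left_mono)
    then have "\<bar>x\<bar> / B \<le> p ^ k" using B(1) by (simp add: pos_divide_le_eq)
    then have "p ^ N < p ^ k" using N by linarith
    then show "k \<in> {..<N}" using p by (simp add: power_strict_decreasing_iff)
  qed
  then have "finite S" by (rule finite_subset) simp
  moreover have "1 \<in> S" using x by (auto simp: S_def)
  ultimately obtain k where k: "k \<in> S" "1 \<le> k" and k_max: "\<And>j. j \<in> S \<Longrightarrow> j \<le> k"
    by (metis Max_ge Max_in empty_iff)
  obtain w where w: "w \<in> K" "x = p ^ k * w" using k(1) by (auto simp: S_def)
  have p_pow: "p ^ j * y \<in> K" if "y \<in> K" for j y
    using that by (induction j) (auto simp: mult.assoc dest: scale)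
  from split[OF w(1)] show ?thesis
  proof (elim disjE bexE)
    fix z assume "z \<in> K" "w = p * z"
    then have "Suc k \<in> S" using w by (auto simp: S_def mult.assoc)
    then show ?thesis using k_max by fastforce
  next
    fix z assume z: "z \<in> K" "w = q * z"
    have "x = p * (q * (p ^ (k - 1) * z))"
      using w z k(2) by (metis mult.assoc mult.left_commute power_eq_if not_one_le_zero)
    then show ?thesis using not_pq[OF p_pow[OF z(1)]] by blast
  next
    fix z assume "z \<in> K" "w = g z"
    then show ?thesis using w k(2) by blast
  qed
qed

lemma sum_pairs_add:
  fixes f :: "'a \<Rightarrow> 'b::comm_semiring_1"
  shows "(\<Sum>p\<in>A \<times> A. f (fst p) + f (snd p)) = 2 * (of_nat (card A) * sum f A)"
proof -
  have "(\<Sum>p\<in>A \<times> A. f (fst p)) = of_nat (card A) * sum f A"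
    by (simp add: sum.cartesian_product' sum_distrib_left)
  moreover have "(\<Sum>p\<in>A \<times> A. f (snd p)) = of_nat (card A) * sum f A"
    by (simp add: sum.cartesian_product')
  ultimately show ?thesis by (simp add: sum.distrib mult_2)
qed

lemma power_Suc_diff_ge:
  fixes s t :: real
  assumes "0 \<le> s" "s \<le> t"
  shows "s ^ k * (t - s) \<le> t ^ Suc k - s ^ Suc k"
proof -
  have "t * s ^ k \<le> t * t ^ k" using assms by (intro mult_left_mono power_mono) auto
  then show ?thesis by (simp add: algebra_simps)
qed

lemma S3_diff: "S3 y - S3 z = (y - z) / 9"
  by (simp add: S3_def field_simps)

context
  fixes b :: real
  assumes b_pos: "0 < b" and b_small: "b < 1/9"
begin

definition ifs :: "real \<Rightarrow> nat \<Rightarrow> real \<Rightarrow> real" where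
  "ifs t i = (if i = 0 then S1 t else if i = 1 then S2 b else S3)"

definition ifs_ratio :: "real \<Rightarrow> nat \<Rightarrow> real" where
  "ifs_ratio t i = (if i = 0 then t else if i = 1 then b else 1/9)"

lemma hutchinson_ifs: "hutchinson (ifs t) {0, 1, 2} A = S1 t ` A \<union> S2 b ` A \<union> S3 ` A"
  by (auto simp: hutchinson_def ifs_def)

lemma ifs_affine: "ifs t i x = ifs t i 0 + ifs_ratio t i * x"
  by (simp add: ifs_def ifs_ratio_def S1_def S2_def S3_def)

lemma ifs_ratio_nonneg: "0 \<le> t \<Longrightarrow> 0 \<le> ifs_ratio t i"
  using b_pos by (simp add: ifs_ratio_def)

lemma ifs_ratio_le: "t \<le> 1/9 \<Longrightarrow> ifs_ratio t i \<le> ifs_ratio (1/9) i"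
  by (simp add: ifs_ratio_def)

lemma ifs_ratio_le_one_ninth: "t \<le> 1/9 \<Longrightarrow> ifs_ratio t i \<le> 1/9"
  using b_small by (simp add: ifs_ratio_def)

lemma ifs_lipschitz:
  assumes "0 \<le> t" "t \<le> 1/9"
  shows "(1/9)-lipschitz_on UNIV (ifs t i)"
proof (rule lipschitz_onI)
  fix x y :: real
  have "dist (ifs t i x) (ifs t i y) = ifs_ratio t i * dist x y"
    using ifs_ratio_nonneg[OF assms(1)]
    by (subst (1 2) ifs_affine) (simp add: dist_real_def abs_mult right_diff_distrib[symmetric])
  also have "\<dots> \<le> 1/9 * dist x y"
    using ifs_ratio_le_one_ninth[OF assms(2)] by (intro mult_right_mono) auto
  finally show "dist (ifs t i x) (ifs t i y) \<le> 1/9 * dist x y" .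
qed simp

lemma ifs_unit_interval:
  "0 \<le> t \<Longrightarrow> t \<le> 1/9 \<Longrightarrow> x \<in> {0..1} \<Longrightarrow> ifs t i x \<in> {0..1}"
  using b_pos b_small by (auto simp: ifs_def S1_def S2_def S3_def intro: mult_le_one)

lemma hutchinson_ifs_unit_interval:
  "0 \<le> t \<Longrightarrow> t \<le> 1/9 \<Longrightarrow> hutchinson (ifs t) {0, 1, 2} {0..1} \<subseteq> {0..1}"
  using ifs_unit_interval by (auto simp: hutchinson_def)

lemma word_map_ifs_affine: "word_map (ifs t) w x = word_map (ifs t) w 0 + (\<Prod>i\<leftarrow>w. ifs_ratio t i) * x"
proof (induction w)
  case (Cons i w)
  show ?case
    by (simp, subst (1 2) ifs_affine, subst Cons) (simp add: algebra_simps)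
qed simp

lemma word_map_ifs_unit_interval:
  "0 \<le> t \<Longrightarrow> t \<le> 1/9 \<Longrightarrow> x \<in> {0..1} \<Longrightarrow> word_map (ifs t) w x \<in> {0..1}"
proof (induction w)
  case (Cons i w)
  then show ?case using ifs_unit_interval[of t "word_map (ifs t) w x" i] by simp
qed simp

lemma Inter_ifs_iterates_fixpoint:
  assumes "0 \<le> t" "t \<le> 1/9"
  defines "K \<equiv> \<Inter>L. (hutchinson (ifs t) {0, 1, 2} ^^ L) {0..1}"
  shows "K \<noteq> {}" "compact K" "hutchinson (ifs t) {0, 1, 2} K = K"
proof -
  have cont: "continuous_on UNIV (ifs t i)" for i
    by (rule lipschitz_on_continuous_on[OF ifs_lipschitz[OF assms(1,2)]])
  note fixpoint = hutchinson_fixpoint_exists[OF _ _ cont compact_Icc _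
      hutchinson_ifs_unit_interval[OF assms(1,2)], folded K_def]
  show "K \<noteq> {}" by (rule fixpoint(1)) simp_all
  show "compact K" by (rule fixpoint(2)) simp_all
  show "hutchinson (ifs t) {0, 1, 2} K = K" by (rule fixpoint(3)) simp_all
qed

lemma attractor_eq_Inter:
  assumes "0 \<le> t" "t \<le> 1/9"
  shows "attractor b t = (\<Inter>L. (hutchinson (ifs t) {0, 1, 2} ^^ L) {0..1})"
    (is "_ = ?K")
  unfolding attractor_def
proof (rule the_equality)
  show "?K \<noteq> {} \<and> compact ?K \<and> ?K = S1 t ` ?K \<union> S2 b ` ?K \<union> S3 ` ?K"
    using Inter_ifs_iterates_fixpoint[OF assms] unfolding hutchinson_ifs by simp
next
  fix K assume "K \<noteq> {} \<and> compact K \<and> K = S1 t ` K \<union> S2 b ` K \<union> S3 ` K"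
  then have K: "compact K" "K \<noteq> {}" "hutchinson (ifs t) {0, 1, 2} K = K"
    unfolding hutchinson_ifs by simp_all
  show "K = ?K"
    using hutchinson_fixpoint_unique[OF ifs_lipschitz[OF assms] _ compact_Icc _
        hutchinson_ifs_unit_interval[OF assms] K] by simp
qed

lemma attractor_fixpoint:
  assumes "0 \<le> t" "t \<le> 1/9"
  shows "S1 t ` attractor b t \<union> S2 b ` attractor b t \<union> S3 ` attractor b t = attractor b t"
  using Inter_ifs_iterates_fixpoint(3)[OF assms]
  unfolding attractor_eq_Inter[OF assms] hutchinson_ifs by simp

lemma attractor_subset_words:
  assumes "0 \<le> t" "t \<le> 1/9"
  shows "attractor b t \<subseteq> (\<Union>w\<in>words {0, 1, 2} L. word_map (ifs t) w ` {0..1})"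
  unfolding attractor_eq_Inter[OF assms] hutchinson_iterates_words[symmetric]
  by (rule INT_lower) (rule UNIV_I)

lemma attractor_subset_unit_interval:
  assumes "0 \<le> t" "t \<le> 1/9"
  shows "attractor b t \<subseteq> {0..1}"
proof -
  have "(\<Inter>L. (hutchinson (ifs t) {0, 1, 2} ^^ L) {0..1}) \<subseteq> (hutchinson (ifs t) {0, 1, 2} ^^ 0) {0..1}"
    by (rule INT_lower) (rule UNIV_I)
  then show ?thesis unfolding attractor_eq_Inter[OF assms] by simp
qed

lemma zero_in_attractor:
  assumes "0 \<le> t" "t \<le> 1/9"
  shows "0 \<in> attractor b t"
proof -
  have "0 \<in> (hutchinson (ifs t) {0, 1, 2} ^^ L) {0..1}" for L
    by (rule fixpoint_in_hutchinson_iterates[of 0]) (simp_all add: ifs_def S1_def)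
  then show ?thesis unfolding attractor_eq_Inter[OF assms] by (rule INT_I)
qed

lemma attractor_closed_under_scaling:
  assumes "0 \<le> t" "t \<le> 1/9" "y \<in> attractor b t"
  shows "t * y \<in> attractor b t" "b * y \<in> attractor b t"
  using assms(3) attractor_fixpoint[OF assms(1,2), THEN equalityD1]
  by (auto simp: S1_def S2_def)

lemma attractor_cases:
  assumes "0 \<le> t" "t \<le> 1/9" "y \<in> attractor b t"
  shows "(\<exists>z\<in>attractor b t. y = t * z) \<or> (\<exists>z\<in>attractor b t. y = b * z)
    \<or> (\<exists>z\<in>attractor b t. y = S3 z)"
  using assms(3) attractor_fixpoint[OF assms(1,2), THEN equalityD2]
  by (auto simp: S1_def S2_def)

definition coincidences :: "nat \<Rightarrow> nat \<Rightarrow> real set" where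
  "coincidences n m = {t. 0 < t \<and> t < 1/9 \<and>
     (\<exists>y\<in>attractor b t. \<exists>y'\<in>attractor b t. t ^ n * S3 y = b ^ m * S3 y')}"

lemma composite_image_subset_images:
  assumes "0 \<le> t" "t \<le> 1/9"
  shows "(S1 t \<circ> S2 b) ` attractor b t \<subseteq> S1 t ` attractor b t \<inter> S2 b ` attractor b t"
proof
  fix x assume "x \<in> (S1 t \<circ> S2 b) ` attractor b t"
  then obtain y where y: "y \<in> attractor b t" "x = t * (b * y)" by (auto simp: S1_def S2_def)
  have "x \<in> S1 t ` attractor b t"
    using y attractor_closed_under_scaling(2)[OF assms y(1)] by (auto simp: S1_def)
  moreover have "x = b * (t * y)" using y by simp
  then have "x \<in> S2 b ` attractor b t"
    using attractor_closed_under_scaling(1)[OF assms y(1)] by (auto simp: S2_def)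
  ultimately show "x \<in> S1 t ` attractor b t \<inter> S2 b ` attractor b t" by blast
qed

lemma attractor_images_intersection:
  assumes t: "0 < t" "t < 1/9" and no_coincidence: "\<And>n m. t \<notin> coincidences (Suc n) (Suc m)"
  shows "S1 t ` attractor b t \<inter> S2 b ` attractor b t = (S1 t \<circ> S2 b) ` attractor b t"
proof -
  let ?K = "attractor b t"
  have t': "0 \<le> t" "t \<le> 1/9" using t by auto
  note scale = attractor_closed_under_scaling[OF t']
  have "x \<in> (S1 t \<circ> S2 b) ` ?K" if x: "x \<in> S1 t ` ?K \<inter> S2 b ` ?K" for x
  proof (rule ccontr)
    assume new: "x \<notin> (S1 t \<circ> S2 b) ` ?K"
    obtain y\<^sub>1 where y\<^sub>1: "y\<^sub>1 \<in> ?K" "x = t * y\<^sub>1"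
      using x by (auto simp: S1_def)
    obtain y\<^sub>2 where y\<^sub>2: "y\<^sub>2 \<in> ?K" "x = b * y\<^sub>2"
      using x by (auto simp: S2_def)
    have not_tb: "x \<noteq> t * (b * y)" and not_bt: "x \<noteq> b * (t * y)" if "y \<in> ?K" for y
      using new that by (auto simp: S1_def S2_def)
    have "x \<noteq> 0" using not_tb[OF zero_in_attractor[OF t']] by simp
    have bounded: "bounded ?K"
      using attractor_subset_unit_interval[OF t'] bounded_subset bounded_closed_interval
      by blast
    obtain n y where n: "n \<ge> 1" "y \<in> ?K" "x = t ^ n * S3 y"
      using power_prefix_decomposition[OF t(1) _ bounded scale(1) attractor_cases[OF t']
          y\<^sub>1 \<open>x \<noteq> 0\<close> not_tb] t(2) by auto
    have scale_b: "b * y \<in> ?K" if "y \<in> ?K" for y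
      using scale(2)[OF that] .
    have cases_b: "(\<exists>z\<in>?K. y = b * z) \<or> (\<exists>z\<in>?K. y = t * z) \<or> (\<exists>z\<in>?K. y = S3 z)"
      if "y \<in> ?K" for y
      using attractor_cases[OF t' that] by blast
    obtain m y' where m: "m \<ge> 1" "y' \<in> ?K" "x = b ^ m * S3 y'"
      using power_prefix_decomposition[OF b_pos _ bounded scale_b cases_b y\<^sub>2 \<open>x \<noteq> 0\<close> not_bt]
        b_small by auto
    have "t ^ n * S3 y = b ^ m * S3 y'" using n(3) m(3) by simp
    then have "t \<in> coincidences (Suc (n - 1)) (Suc (m - 1))"
      unfolding coincidences_def using t n(1,2) m(1,2) by auto
    then show False using no_coincidence by blast
  qed
  then show ?thesis using composite_image_subset_images[OF t'] by blast
qed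

lemma word_origin_lipschitz:
  assumes "0 \<le> s" "s \<le> 1/9" "0 \<le> t" "t \<le> 1/9"
  shows "\<bar>word_map (ifs t) w 0 - word_map (ifs s) w 0\<bar> \<le> 9/8 * \<bar>t - s\<bar>"
proof (induction w)
  case (Cons i w)
  define u where "u = word_map (ifs s) w 0"
  define v where "v = word_map (ifs t) w 0"
  have IH: "\<bar>v - u\<bar> \<le> 9/8 * \<bar>t - s\<bar>" using Cons.IH by (simp add: u_def v_def)
  have v: "0 \<le> v" "v \<le> 1" using word_map_ifs_unit_interval[OF assms(3,4)] by (auto simp: v_def)
  have "\<bar>ifs t i v - ifs s i u\<bar> \<le> \<bar>t - s\<bar> + 1/9 * \<bar>v - u\<bar>"
  proof -
    consider "i = 0" | "i = 1" | "i \<noteq> 0" "i \<noteq> 1" by blast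
    then show ?thesis
    proof cases
      case 1
      have "\<bar>t * v - s * u\<bar> = \<bar>(t - s) * v + s * (v - u)\<bar>" by (simp add: algebra_simps)
      also have "\<dots> \<le> \<bar>t - s\<bar> * v + s * \<bar>v - u\<bar>"
        using v assms(1) by (simp add: abs_mult abs_triangle_ineq[THEN order.trans])
      also have "\<dots> \<le> \<bar>t - s\<bar> + 1/9 * \<bar>v - u\<bar>"
        using v assms(2) by (intro add_mono mult_right_mono) (auto simp: mult_left_le)
      finally show ?thesis using 1 by (simp add: ifs_def S1_def)
    next
      case 2
      have "\<bar>b * v - b * u\<bar> = b * \<bar>v - u\<bar>"
        using b_pos by (simp add: abs_mult right_diff_distrib[symmetric])
      also have "\<dots> \<le> \<bar>t - s\<bar> + 1/9 * \<bar>v - u\<bar>"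
        using b_small by (intro add_increasing mult_right_mono) auto
      finally show ?thesis using 2 by (simp add: ifs_def S2_def)
    next
      case 3
      then show ?thesis by (simp add: ifs_def S3_def diff_divide_distrib[symmetric])
    qed
  qed
  also have "\<dots> \<le> 9/8 * \<bar>t - s\<bar>" using IH by simp
  finally show ?case by (simp add: u_def v_def)
qed simp

definition gap :: "nat \<Rightarrow> nat \<Rightarrow> nat list \<Rightarrow> nat list \<Rightarrow> real \<Rightarrow> real" where
  "gap n m w w' t = t ^ n * S3 (word_map (ifs t) w 0) - b ^ m * S3 (word_map (ifs t) w' 0)"

lemma gap_steep:
  assumes t: "0 < s" "s < t" "t \<le> 1/9" and regular: "8 * b ^ m \<le> s ^ k"
  shows "4 * b ^ m * (t - s) \<le> gap (Suc k) m w w' t - gap (Suc k) m w w' s"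
proof -
  define A where "A r = word_map (ifs r) w 0" for r
  define C where "C r = word_map (ifs r) w' 0" for r
  define d where "d = t - s"
  define P where "P = s ^ k"
  have "0 < d" "0 \<le> P" using t by (simp_all add: d_def P_def)
  have A_lip: "\<bar>A t - A s\<bar> \<le> 9/8 * d" and C_lip: "\<bar>C t - C s\<bar> \<le> 9/8 * d"
    using word_origin_lipschitz[of s t] t unfolding A_def C_def d_def by auto
  have "P * d \<le> t ^ Suc k - s ^ Suc k"
    unfolding P_def d_def using t by (intro power_Suc_diff_ge) auto
  moreover have "8/9 \<le> S3 (A t)"
    using word_map_ifs_unit_interval[of t 0 w] t by (simp add: A_def S3_def)
  moreover have "0 \<le> P * d" using \<open>0 < d\<close> \<open>0 \<le> P\<close> by simp
  ultimately have first: "P * d * (8/9) \<le> (t ^ Suc k - s ^ Suc k) * S3 (A t)"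
    by (intro mult_mono) auto
  have "\<bar>s ^ Suc k * (S3 (A t) - S3 (A s))\<bar> = s * P * (\<bar>A t - A s\<bar> / 9)"
    using t by (simp add: S3_diff P_def abs_mult)
  also have "\<dots> \<le> (1/9) * P * (9/8 * d / 9)"
    using t A_lip \<open>0 \<le> P\<close> by (intro mult_mono) auto
  finally have second: "\<bar>s ^ Suc k * (S3 (A t) - S3 (A s))\<bar> \<le> P * d / 72" by simp
  have "\<bar>b ^ m * (S3 (C t) - S3 (C s))\<bar> = b ^ m * (\<bar>C t - C s\<bar> / 9)"
    using b_pos by (simp add: S3_diff abs_mult)
  also have "\<dots> \<le> (P / 8) * (9/8 * d / 9)"
    using regular C_lip b_pos \<open>0 \<le> P\<close> by (intro mult_mono) (auto simp: P_def)
  finally have third: "\<bar>b ^ m * (S3 (C t) - S3 (C s))\<bar> \<le> P * d / 64" by simp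
  have "gap (Suc k) m w w' t - gap (Suc k) m w w' s
      = (t ^ Suc k - s ^ Suc k) * S3 (A t) + s ^ Suc k * (S3 (A t) - S3 (A s))
        - b ^ m * (S3 (C t) - S3 (C s))"
    by (simp add: gap_def A_def C_def algebra_simps)
  moreover have "8 * (b ^ m * d) \<le> P * d"
    using regular \<open>0 < d\<close> by (simp add: P_def)
  ultimately have "4 * (b ^ m * d) \<le> gap (Suc k) m w w' t - gap (Suc k) m w w' s"
    using first second third \<open>0 < d\<close> \<open>0 \<le> P\<close> unfolding abs_le_iff by linarith
  then show ?thesis by (simp add: d_def mult.assoc)
qed

lemma coincidence_regular:
  assumes "t \<in> coincidences (Suc k) m"
  shows "8 * b ^ m \<le> t ^ k"
proof -
  obtain y y' where t: "0 < t" "t < 1/9" and y: "y \<in> attractor b t" "y' \<in> attractor b t"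
    and eq: "t ^ Suc k * S3 y = b ^ m * S3 y'"
    using assms unfolding coincidences_def by blast
  have "y \<in> {0..1}" "y' \<in> {0..1}"
    using y attractor_subset_unit_interval[of t] t by auto
  then have "b ^ m * (8/9) \<le> b ^ m * S3 y'" "t ^ Suc k * S3 y \<le> t ^ Suc k * 1"
    using b_pos t by (auto intro!: mult_left_mono simp: S3_def)
  then have "b ^ m * (8/9) \<le> t * t ^ k" using eq by simp
  also have "\<dots> \<le> 1/9 * t ^ k" using t by (intro mult_right_mono) auto
  finally show ?thesis by simp
qed

definition word_weight :: "nat list \<Rightarrow> real" where
  "word_weight w = (\<Prod>i\<leftarrow>w. ifs_ratio (1/9) i)"

lemma prod_ifs_ratio_le_word_weight:
  assumes "0 \<le> t" "t \<le> 1/9"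
  shows "0 \<le> (\<Prod>i\<leftarrow>w. ifs_ratio t i)" "(\<Prod>i\<leftarrow>w. ifs_ratio t i) \<le> word_weight w"
proof -
  show "0 \<le> (\<Prod>i\<leftarrow>w. ifs_ratio t i)"
    using ifs_ratio_nonneg[OF assms(1)] by (intro prod_list_nonneg) auto
  show "(\<Prod>i\<leftarrow>w. ifs_ratio t i) \<le> word_weight w"
    unfolding word_weight_def using ifs_ratio_nonneg[OF assms(1)] ifs_ratio_le[OF assms(2)]
    by (intro prod_list_map_mono) auto
qed

lemma word_weight_nonneg: "0 \<le> word_weight w"
  using prod_ifs_ratio_le_word_weight(1)[of "1/9" w] by (simp add: word_weight_def)

lemma sum_word_weight: "(\<Sum>w\<in>words {0, 1, 2} L. word_weight w) = (2/9 + b) ^ L"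
  unfolding word_weight_def by (simp add: sum_words_prod_list ifs_ratio_def)

lemma coincidence_gap_small:
  assumes "t \<in> coincidences n m"
  shows "\<exists>w\<in>words {0, 1, 2} L. \<exists>w'\<in>words {0, 1, 2} L.
    \<bar>gap n m w w' t\<bar> \<le> word_weight w + word_weight w'"
proof -
  obtain y y' where t: "0 < t" "t < 1/9" and y: "y \<in> attractor b t" "y' \<in> attractor b t"
    and eq: "t ^ n * S3 y = b ^ m * S3 y'"
    using assms unfolding coincidences_def by blast
  have t': "0 \<le> t" "t \<le> 1/9" using t by auto
  obtain w x where w: "w \<in> words {0, 1, 2} L" "x \<in> {0..1}" "y = word_map (ifs t) w x"
    using y(1) attractor_subset_words[OF t', of L] by blast
  obtain w' x' where w': "w' \<in> words {0, 1, 2} L" "x' \<in> {0..1}" "y' = word_map (ifs t) w' x'"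
    using y(2) attractor_subset_words[OF t', of L] by blast
  define u where "u = t ^ n * ((\<Prod>i\<leftarrow>w. ifs_ratio t i) * x)"
  define u' where "u' = b ^ m * ((\<Prod>i\<leftarrow>w'. ifs_ratio t i) * x')"
  have "gap n m w w' t = (t ^ n * S3 y - u / 9) - (b ^ m * S3 y' - u' / 9)"
    unfolding gap_def u_def u'_def w(3) w'(3)
    by (subst (1 2) word_map_ifs_affine) (simp add: S3_def algebra_simps add_divide_distrib)
  then have gap_eq: "gap n m w w' t = u' / 9 - u / 9" using eq by simp
  have bound: "0 \<le> c * (r * z) \<and> c * (r * z) \<le> r'"
    if "0 \<le> c" "c \<le> 1" "0 \<le> r" "r \<le> r'" "z \<in> {0..1}" for c r r' z :: real
  proof -
    have "c * (r * z) \<le> 1 * (r' * 1)" using that by (intro mult_mono) auto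
    then show ?thesis using that by simp
  qed
  have "0 \<le> u \<and> u \<le> word_weight w"
    unfolding u_def using t' w(2) prod_ifs_ratio_le_word_weight[OF t', of w]
    by (intro bound) (auto intro: power_le_one)
  moreover have "0 \<le> u' \<and> u' \<le> word_weight w'"
    unfolding u'_def using b_pos b_small w'(2) prod_ifs_ratio_le_word_weight[OF t', of w']
    by (intro bound) (auto intro: power_le_one)
  ultimately have "\<bar>gap n m w w' t\<bar> \<le> word_weight w + word_weight w'"
    unfolding gap_eq by (simp add: abs_le_iff)
  then show ?thesis using w(1) w'(1) by blast
qed

definition gap_sublevel :: "nat \<Rightarrow> nat \<Rightarrow> nat list \<Rightarrow> nat list \<Rightarrow> real set" where
  "gap_sublevel k m w w' = {t. 0 < t \<and> t < 1/9 \<and> 8 * b ^ m \<le> t ^ k \<and>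
     \<bar>gap (Suc k) m w w' t\<bar> \<le> word_weight w + word_weight w'}"

lemma coincidences_subset_gap_sublevels:
  "coincidences (Suc k) m
    \<subseteq> (\<Union>p\<in>words {0, 1, 2} L \<times> words {0, 1, 2} L. gap_sublevel k m (fst p) (snd p))"
proof
  fix t assume t: "t \<in> coincidences (Suc k) m"
  then obtain w w' where "w \<in> words {0, 1, 2} L" "w' \<in> words {0, 1, 2} L"
    "\<bar>gap (Suc k) m w w' t\<bar> \<le> word_weight w + word_weight w'"
    using coincidence_gap_small[of t _ _ L] by blast
  moreover have "0 < t \<and> t < 1/9" using t unfolding coincidences_def by blast
  ultimately show "t \<in> (\<Union>p\<in>words {0, 1, 2} L \<times> words {0, 1, 2} L. gap_sublevel k m (fst p) (snd p))"
    using coincidence_regular[OF t] unfolding gap_sublevel_def by force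
qed

lemma gap_sublevel_outer_measure:
  "\<exists>T. gap_sublevel k m w w' \<subseteq> T \<and> T \<in> lmeasurable \<and>
    measure lebesgue T \<le> (word_weight w + word_weight w') / b ^ m"
proof -
  let ?E = "gap_sublevel k m w w'"
  have "0 < 4 * b ^ m" using b_pos by simp
  moreover have "0 \<le> word_weight w + word_weight w'"
    using word_weight_nonneg by (simp add: add_nonneg_nonneg)
  moreover have "4 * b ^ m * (t - s) \<le> gap (Suc k) m w w' t - gap (Suc k) m w w' s"
    if "s \<in> ?E" "t \<in> ?E" "s < t" for s t
    using that by (intro gap_steep) (auto simp: gap_sublevel_def)
  moreover have "\<bar>gap (Suc k) m w w' t\<bar> \<le> word_weight w + word_weight w'" if "t \<in> ?E" for t
    using that by (simp add: gap_sublevel_def)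
  ultimately have "\<exists>T. ?E \<subseteq> T \<and> T \<in> lmeasurable \<and>
      measure lebesgue T \<le> 4 * (word_weight w + word_weight w') / (4 * b ^ m)"
    by (rule steep_function_small_values_outer_measure)
  moreover have "4 * r / (4 * b ^ m) = r / b ^ m" for r :: real by simp
  ultimately show ?thesis by (simp only:)
qed

lemma negligible_coincidences: "negligible (coincidences (Suc k) m)"
  unfolding negligible_outer_le
proof (intro allI impI)
  fix e :: real assume "0 < e"
  define q where "q = 3 * (2/9 + b)"
  have "0 < b ^ m" using b_pos by simp
  have "q < 1" using b_small by (simp add: q_def)
  then obtain L where L: "q ^ L < e * b ^ m / 2"
    using real_arch_pow_inv[of "e * b ^ m / 2" q] \<open>0 < e\<close> \<open>0 < b ^ m\<close> by auto
  let ?W = "words {0, 1, 2::nat} L"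
  have "finite (?W \<times> ?W)" by (simp add: finite_words)
  then have "\<exists>T. (\<Union>p\<in>?W \<times> ?W. gap_sublevel k m (fst p) (snd p)) \<subseteq> T \<and> T \<in> lmeasurable \<and>
      measure lebesgue T \<le> (\<Sum>p\<in>?W \<times> ?W. (word_weight (fst p) + word_weight (snd p)) / b ^ m)"
    by (rule outer_measure_UN_le) (rule gap_sublevel_outer_measure)
  then obtain T where T: "(\<Union>p\<in>?W \<times> ?W. gap_sublevel k m (fst p) (snd p)) \<subseteq> T" "T \<in> lmeasurable"
    "measure lebesgue T \<le> (\<Sum>p\<in>?W \<times> ?W. (word_weight (fst p) + word_weight (snd p)) / b ^ m)"
    by blast
  have "(\<Sum>p\<in>?W \<times> ?W. (word_weight (fst p) + word_weight (snd p)) / b ^ m)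
      = 2 * (card ?W * (\<Sum>w\<in>?W. word_weight w)) / b ^ m"
    by (simp add: sum_divide_distrib[symmetric] sum_pairs_add)
  also have "\<dots> = 2 * q ^ L / b ^ m"
  proof -
    have "card ?W = 3 ^ L" by (simp add: card_words numeral_3_eq_3)
    moreover have "q ^ L = 3 ^ L * (2/9 + b) ^ L"
      unfolding q_def by (rule power_mult_distrib)
    ultimately show ?thesis unfolding sum_word_weight by simp
  qed
  also have "\<dots> \<le> e" using L \<open>0 < b ^ m\<close> by (simp add: pos_divide_le_eq)
  finally show "\<exists>T. coincidences (Suc k) m \<subseteq> T \<and> T \<in> lmeasurable \<and> measure lebesgue T \<le> e"
    using T coincidences_subset_gap_sublevels[of k m L] by (meson order.trans)
qed

end

theorem proposition9:
  fixes b :: real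
  assumes "0 < b" and "b < 1/9"
  shows "AE t in lborel. t \<in> {0<..<1/9} \<longrightarrow>
           S1 t ` attractor b t \<inter> S2 b ` attractor b t
             = (S1 t \<circ> S2 b) ` attractor b t"
proof -
  define N where "N = (\<Union>(n, m). coincidences b (Suc n) (Suc m))"
  have "negligible N"
    unfolding N_def by (intro negligible_countable_Union) (auto intro: negligible_coincidences[OF assms])
  then have "AE t in lebesgue. t \<notin> N"
    by (intro AE_not_in) (simp add: negligible_iff_null_sets)
  then have "AE t in lborel. t \<notin> N"
    by (simp add: AE_completion_iff)
  then show ?thesis
  proof (rule eventually_mono, intro impI)
    fix t assume "t \<notin> N" "t \<in> {0<..<1/9}"
    then show "S1 t ` attractor b t \<inter> S2 b ` attractor b t = (S1 t \<circ> S2 b) ` attractor b t"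
      using attractor_images_intersection[OF assms] unfolding N_def by auto
  qed
qed

end
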